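(* Let $k\ge 1$ be an integer. For any graph $G$ with minimum degree $\delta(G)\ge k$, $\mathrm{TC}_k(G)\ge \delta(G)-k+2$. This bound is sharp, i.e., there exist graphs attaining equality.
   Context: All graphs are finite, simple and connected. $N(v)$ denotes the open neighborhood of a vertex $v$. For a graph $G$ with $\delta(G)\ge k$, a set $S\subseteq V(G)$ is a total $k$-dominating set if $|N(v)\cap S|\ge k$ for every $v\in V(G)$. Two disjoint sets $U,W\subseteq V(G)$ form a total $k$-coalition if neither $U$ nor $W$ is a total $k$-dominating set, but $U\cup W$ is. A total $k$-coalition partition of $G$ is a partition $\Omega$ of $V(G)$ such that every set in $\Omega$ forms a total $k$-coalition with some other set in $\Omega$. The total $k$-coalition number $\mathrm{TC}_k(G)$ is the maximum cardinality of a total $k$-coalition partition of $G$. *)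

theory Defs
  imports Main
begin

definition graph :: "'a set \<Rightarrow> ('a \<Rightarrow> 'a \<Rightarrow> bool) \<Rightarrow> bool" where
  "graph V E \<longleftrightarrow> finite V \<and> V \<noteq> {}
     \<and> (\<forall>u v. E u v \<longrightarrow> u \<in> V \<and> v \<in> V)
     \<and> (\<forall>u v. E u v \<longrightarrow> E v u)
     \<and> (\<forall>v. \<not> E v v)
     \<and> (\<forall>u\<in>V. \<forall>v\<in>V. E\<^sup>*\<^sup>* u v)"

definition nbhd :: "'a set \<Rightarrow> ('a \<Rightarrow> 'a \<Rightarrow> bool) \<Rightarrow> 'a \<Rightarrow> 'a set" where
  "nbhd V E v = {u \<in> V. E v u}"

definition min_degree :: "'a set \<Rightarrow> ('a \<Rightarrow> 'a \<Rightarrow> bool) \<Rightarrow> nat" where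
  "min_degree V E = Min ((\<lambda>v. card (nbhd V E v)) ` V)"

definition total_k_dom :: "nat \<Rightarrow> 'a set \<Rightarrow> ('a \<Rightarrow> 'a \<Rightarrow> bool) \<Rightarrow> 'a set \<Rightarrow> bool" where
  "total_k_dom k V E S \<longleftrightarrow> S \<subseteq> V \<and> (\<forall>v\<in>V. card (nbhd V E v \<inter> S) \<ge> k)"

definition total_k_coalition :: "nat \<Rightarrow> 'a set \<Rightarrow> ('a \<Rightarrow> 'a \<Rightarrow> bool) \<Rightarrow> 'a set \<Rightarrow> 'a set \<Rightarrow> bool" where
  "total_k_coalition k V E U W \<longleftrightarrow> U \<inter> W = {}
     \<and> \<not> total_k_dom k V E U \<and> \<not> total_k_dom k V E W \<and> total_k_dom k V E (U \<union> W)"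

definition is_partition :: "'a set \<Rightarrow> 'a set set \<Rightarrow> bool" where
  "is_partition V \<Omega> \<longleftrightarrow> \<Union>\<Omega> = V \<and> {} \<notin> \<Omega>
     \<and> (\<forall>A\<in>\<Omega>. \<forall>B\<in>\<Omega>. A \<noteq> B \<longrightarrow> A \<inter> B = {})"

definition total_k_coalition_partition :: "nat \<Rightarrow> 'a set \<Rightarrow> ('a \<Rightarrow> 'a \<Rightarrow> bool) \<Rightarrow> 'a set set \<Rightarrow> bool" where
  "total_k_coalition_partition k V E \<Omega> \<longleftrightarrow> is_partition V \<Omega>
     \<and> (\<forall>A\<in>\<Omega>. \<exists>B\<in>\<Omega>. B \<noteq> A \<and> total_k_coalition k V E A B)"

definition TC :: "nat \<Rightarrow> 'a set \<Rightarrow> ('a \<Rightarrow> 'a \<Rightarrow> bool) \<Rightarrow> nat" where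
  "TC k V E = Max (card ` {\<Omega>. total_k_coalition_partition k V E \<Omega>})"

end

theory Submission
  imports Defs
begin

text \<open>Let \<open>v\<close> be a vertex of minimum degree \<open>\<delta>\<close> and let \<open>X\<close> consist of \<open>\<delta> - k + 1\<close>
  neighbours of \<open>v\<close>. Removing \<open>X\<close> leaves \<open>v\<close> with only \<open>k - 1\<close> neighbours, so \<open>V - X\<close> is not
  total \<open>k\<close>-dominating; but after putting back any single \<open>u \<in> X\<close> at most \<open>\<delta> - k\<close> vertices are
  missing, so every vertex keeps at least \<open>k\<close> neighbours. Hence the singletons of \<open>X\<close> together
  with \<open>V - X\<close> form a total \<open>k\<close>-coalition partition with \<open>\<delta> - k + 2\<close> blocks. In the complete
  graph \<open>K\<^sub>k\<^sub>+\<^sub>1\<close> the only total \<open>k\<close>-dominating set is the whole vertex set, so every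
  coalition consists of two blocks covering everything, and no partition has more than
  \<open>2 = \<delta> - k + 2\<close> blocks.\<close>

lemma min_degree_le_card_nbhd:
  assumes "finite V" "w \<in> V"
  shows "min_degree V E \<le> card (nbhd V E w)"
  unfolding min_degree_def using assms by (intro Min_le) auto

lemma min_degree_attained:
  assumes "finite V" "V \<noteq> {}"
  obtains v where "v \<in> V" "card (nbhd V E v) = min_degree V E"
proof -
  have "min_degree V E \<in> (\<lambda>v. card (nbhd V E v)) ` V"
    unfolding min_degree_def using assms by (intro Min_in) auto
  then show ?thesis using that by auto
qed

lemma finite_total_k_coalition_partitions:
  assumes "finite V"
  shows "finite {\<Omega>. total_k_coalition_partition k V E \<Omega>}"
proof (rule finite_subset)
  show "{\<Omega>. total_k_coalition_partition k V E \<Omega>} \<subseteq> Pow (Pow V)"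
    by (auto simp: total_k_coalition_partition_def is_partition_def)
qed (use assms in simp)

lemma card_le_TC:
  assumes "finite V" "total_k_coalition_partition k V E \<Omega>"
  shows "card \<Omega> \<le> TC k V E"
  unfolding TC_def using assms finite_total_k_coalition_partitions[OF assms(1)] by simp

lemma TC_le:
  assumes "finite V" "total_k_coalition_partition k V E \<Omega>\<^sub>0"
    and "\<And>\<Omega>. total_k_coalition_partition k V E \<Omega> \<Longrightarrow> card \<Omega> \<le> n"
  shows "TC k V E \<le> n"
  unfolding TC_def using assms finite_total_k_coalition_partitions[OF assms(1)]
  by (subst Max_le_iff) auto

lemma singleton_not_total_k_dom:
  assumes "\<And>v. \<not> E v v" "u \<in> V" "k \<ge> 1"
  shows "\<not> total_k_dom k V E {u}"
proof -
  have "nbhd V E u \<inter> {u} = {}" using assms(1) by (auto simp: nbhd_def)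
  then show ?thesis unfolding total_k_dom_def using assms(2,3) by force
qed

lemma total_k_dom_Diff:
  assumes "finite V" "finite Y" "\<And>w. w \<in> V \<Longrightarrow> card Y + k \<le> card (nbhd V E w)"
  shows "total_k_dom k V E (V - Y)"
  unfolding total_k_dom_def
proof (intro conjI ballI)
  fix w assume "w \<in> V"
  have "nbhd V E w \<inter> (V - Y) = nbhd V E w - Y" by (auto simp: nbhd_def)
  moreover have "card (nbhd V E w) - card Y \<le> card (nbhd V E w - Y)"
    using assms(2) by (rule diff_card_le_card_Diff)
  ultimately show "k \<le> card (nbhd V E w \<inter> (V - Y))" using assms(3)[OF \<open>w \<in> V\<close>] by simp
qed auto

lemma not_total_k_dom_Diff:
  assumes "finite V" "v \<in> V" "Y \<subseteq> nbhd V E v" "card (nbhd V E v) < card Y + k"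
  shows "\<not> total_k_dom k V E (V - Y)"
proof -
  have fin: "finite (nbhd V E v)" using assms(1) by (simp add: nbhd_def)
  have "nbhd V E v \<inter> (V - Y) = nbhd V E v - Y" by (auto simp: nbhd_def)
  then have "card (nbhd V E v \<inter> (V - Y)) = card (nbhd V E v) - card Y"
    using card_Diff_subset[OF finite_subset[OF assms(3) fin] assms(3)] by simp
  moreover have "card Y \<le> card (nbhd V E v)" using card_mono[OF fin assms(3)] .
  ultimately have "card (nbhd V E v \<inter> (V - Y)) < k" using assms(4) by linarith
  then show ?thesis unfolding total_k_dom_def using assms(2) not_le by blast
qed

lemma total_k_coalition_partition_singletons:
  assumes "X \<subseteq> V" "X \<noteq> {}" "V - X \<noteq> {}"
    and "\<not> total_k_dom k V E (V - X)"
    and "\<And>u. u \<in> X \<Longrightarrow> \<not> total_k_dom k V E {u}"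
    and "\<And>u. u \<in> X \<Longrightarrow> total_k_dom k V E (insert u (V - X))"
  shows "total_k_coalition_partition k V E (insert (V - X) ((\<lambda>u. {u}) ` X))"
    (is "total_k_coalition_partition k V E ?\<Omega>")
proof -
  have Diff_ne_singleton: "V - X \<noteq> {u}" if "u \<in> X" for u
    using that assms(3) by auto
  have coalition: "total_k_coalition k V E {u} (V - X)" if "u \<in> X" for u
    unfolding total_k_coalition_def using that assms(4-6) by simp
  have "\<exists>B\<in>?\<Omega>. B \<noteq> A \<and> total_k_coalition k V E A B" if "A \<in> ?\<Omega>" for A
  proof -
    from that consider "A = V - X" | u where "u \<in> X" "A = {u}" by auto
    then show ?thesis
    proof cases
      case 1
      obtain u where "u \<in> X" using assms(2) by auto
      then show ?thesis using 1 coalition Diff_ne_singleton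
        by (intro bexI[of _ "{u}"]) (auto simp: total_k_coalition_def)
    next
      case 2
      then show ?thesis using coalition Diff_ne_singleton by (intro bexI[of _ "V - X"]) auto
    qed
  qed
  moreover have "is_partition V ?\<Omega>"
    unfolding is_partition_def using assms(1,3) by auto
  ultimately show ?thesis unfolding total_k_coalition_partition_def by blast
qed

lemma card_singletons_partition:
  assumes "finite X" "V - X \<noteq> {}"
  shows "card (insert (V - X) ((\<lambda>u. {u}) ` X)) = card X + 1"
proof -
  have "V - X \<notin> (\<lambda>u. {u}) ` X" using assms(2) by auto
  moreover have "card ((\<lambda>u. {u}) ` X) = card X" by (intro card_image) (auto simp: inj_on_def)
  ultimately show ?thesis using assms(1) by simp
qed

lemma exists_total_k_coalition_partition_min_degree:
  assumes "graph V E" "min_degree V E \<ge> k" "k \<ge> 1"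
  obtains \<Omega> where "total_k_coalition_partition k V E \<Omega>" "card \<Omega> = min_degree V E - k + 2"
proof -
  let ?\<delta> = "min_degree V E"
  have fin: "finite V" and "V \<noteq> {}" and irrefl: "\<And>v. \<not> E v v"
    using assms(1) by (auto simp: graph_def)
  obtain v where v: "v \<in> V" "card (nbhd V E v) = ?\<delta>"
    using min_degree_attained[OF fin \<open>V \<noteq> {}\<close>] by blast
  have "?\<delta> - k + 1 \<le> card (nbhd V E v)" using v assms(2,3) by linarith
  then obtain X where X: "X \<subseteq> nbhd V E v" "card X = ?\<delta> - k + 1"
    by (rule obtain_subset_with_card_n)
  have "X \<subseteq> V" using X(1) by (auto simp: nbhd_def)
  have "finite X" using finite_subset[OF \<open>X \<subseteq> V\<close> fin] .
  have "v \<in> V - X" using v(1) X(1) irrefl by (auto simp: nbhd_def)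
  then have "V - X \<noteq> {}" by blast
  have "X \<noteq> {}" using X(2) by auto
  have "total_k_coalition_partition k V E (insert (V - X) ((\<lambda>u. {u}) ` X))"
  proof (rule total_k_coalition_partition_singletons[OF \<open>X \<subseteq> V\<close> \<open>X \<noteq> {}\<close> \<open>V - X \<noteq> {}\<close>])
    show "\<not> total_k_dom k V E (V - X)"
      using not_total_k_dom_Diff[OF fin v(1) X(1)] v(2) X(2) assms(2,3) by simp
  next
    fix u assume "u \<in> X"
    then show "\<not> total_k_dom k V E {u}"
      using \<open>X \<subseteq> V\<close> assms(3) by (intro singleton_not_total_k_dom[OF irrefl]) auto
    have "card (X - {u}) + k \<le> card (nbhd V E w)" if "w \<in> V" for w
      using \<open>u \<in> X\<close> \<open>finite X\<close> X(2) assms(2) min_degree_le_card_nbhd[OF fin that, of E] by simp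
    then have "total_k_dom k V E (V - (X - {u}))"
      using \<open>finite X\<close> by (intro total_k_dom_Diff[OF fin]) auto
    moreover have "V - (X - {u}) = insert u (V - X)" using \<open>u \<in> X\<close> \<open>X \<subseteq> V\<close> by auto
    ultimately show "total_k_dom k V E (insert u (V - X))" by simp
  qed
  moreover have "card (insert (V - X) ((\<lambda>u. {u}) ` X)) = ?\<delta> - k + 2"
    using card_singletons_partition[OF \<open>finite X\<close> \<open>V - X \<noteq> {}\<close>] X(2) by simp
  ultimately show ?thesis by (rule that)
qed

lemma TC_ge_min_degree:
  assumes "graph V E" "min_degree V E \<ge> k" "k \<ge> 1"
  shows "TC k V E \<ge> min_degree V E - k + 2"
proof -
  obtain \<Omega> where "total_k_coalition_partition k V E \<Omega>" "card \<Omega> = min_degree V E - k + 2"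
    using exists_total_k_coalition_partition_min_degree[OF assms] .
  moreover have "finite V" using assms(1) by (simp add: graph_def)
  ultimately show ?thesis using card_le_TC by metis
qed

lemma card_total_k_coalition_partition_le_2:
  assumes "total_k_coalition_partition k V E \<Omega>"
    and "\<And>S. total_k_dom k V E S \<Longrightarrow> S = V"
  shows "card \<Omega> \<le> 2"
proof (cases "\<Omega> = {}")
  case False
  have P: "is_partition V \<Omega>" using assms(1) by (simp add: total_k_coalition_partition_def)
  obtain A where A: "A \<in> \<Omega>" using False by auto
  then obtain B where B: "B \<in> \<Omega>" "total_k_coalition k V E A B"
    using assms(1) by (auto simp: total_k_coalition_partition_def)
  then have "A \<union> B = V" using assms(2) unfolding total_k_coalition_def by blast
  have "\<Omega> \<subseteq> {A, B}"
  proof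
    fix C assume C: "C \<in> \<Omega>"
    show "C \<in> {A, B}"
    proof (rule ccontr)
      assume "C \<notin> {A, B}"
      then have "C \<inter> V = {}" using P C A B \<open>A \<union> B = V\<close> by (auto simp: is_partition_def)
      moreover have "C \<noteq> {}" "C \<subseteq> V" using P C by (auto simp: is_partition_def)
      ultimately show False by blast
    qed
  qed
  then have "card \<Omega> \<le> card {A, B}" by (intro card_mono) simp_all
  also have "\<dots> \<le> 2" by (cases "A = B") simp_all
  finally show ?thesis .
qed simp

definition complete_adj :: "'a set \<Rightarrow> 'a \<Rightarrow> 'a \<Rightarrow> bool" where
  "complete_adj V u v \<longleftrightarrow> u \<in> V \<and> v \<in> V \<and> u \<noteq> v"

lemma graph_complete_adj:
  assumes "finite V" "V \<noteq> {}"
  shows "graph V (complete_adj V)"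
proof -
  have "(complete_adj V)\<^sup>*\<^sup>* u v" if "u \<in> V" "v \<in> V" for u v
    using that by (cases "u = v") (auto simp: complete_adj_def)
  then show ?thesis using assms unfolding graph_def by (auto simp: complete_adj_def)
qed

lemma nbhd_complete_adj: "v \<in> V \<Longrightarrow> nbhd V (complete_adj V) v = V - {v}"
  by (auto simp: nbhd_def complete_adj_def)

lemma min_degree_complete_adj:
  assumes "finite V" "V \<noteq> {}"
  shows "min_degree V (complete_adj V) = card V - 1"
proof -
  have "(\<lambda>v. card (nbhd V (complete_adj V) v)) ` V = {card V - 1}"
    using assms by (auto simp: nbhd_complete_adj)
  then show ?thesis by (simp add: min_degree_def)
qed

lemma total_k_dom_complete_adj_iff:
  assumes "finite V" "card V = k + 1" "k \<ge> 1"
  shows "total_k_dom k V (complete_adj V) S \<longleftrightarrow> S = V"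
proof
  assume S: "total_k_dom k V (complete_adj V) S"
  then have "S \<subseteq> V" by (simp add: total_k_dom_def)
  have card_Diff: "card (S - {x}) \<ge> k" if "x \<in> V" for x
  proof -
    have "k \<le> card (nbhd V (complete_adj V) x \<inter> S)"
      using S that unfolding total_k_dom_def by blast
    also have "nbhd V (complete_adj V) x \<inter> S = S - {x}"
      using \<open>S \<subseteq> V\<close> nbhd_complete_adj[OF that] by auto
    finally show ?thesis .
  qed
  obtain x where "x \<in> V" using assms(2) by fastforce
  then have "S \<noteq> {}" using card_Diff assms(3) by fastforce
  then obtain y where "y \<in> S" by auto
  have "finite S" using finite_subset[OF \<open>S \<subseteq> V\<close> assms(1)] .
  have "k \<le> card S - 1" using card_Diff[of y] \<open>y \<in> S\<close> \<open>S \<subseteq> V\<close> \<open>finite S\<close> by auto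
  moreover have "card S \<ge> 1" using \<open>y \<in> S\<close> \<open>finite S\<close> card_0_eq by fastforce
  ultimately have "card S \<ge> card V" using assms(2) by linarith
  then show "S = V" using card_seteq[OF assms(1) \<open>S \<subseteq> V\<close>] by simp
next
  assume "S = V"
  then show "total_k_dom k V (complete_adj V) S"
    using assms(2) by (simp add: total_k_dom_def nbhd_complete_adj Int_absorb2)
qed

theorem theorem3p1:
  fixes k :: nat
  assumes "k \<ge> 1"
  shows "(\<forall>(V :: 'a set) E. graph V E \<and> min_degree V E \<ge> k
            \<longrightarrow> TC k V E \<ge> min_degree V E - k + 2)
       \<and> (\<exists>(V :: nat set) E. graph V E \<and> min_degree V E \<ge> k
            \<and> TC k V E = min_degree V E - k + 2)"
proof
  show "\<forall>(V :: 'a set) E. graph V E \<and> min_degree V E \<ge> k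
            \<longrightarrow> TC k V E \<ge> min_degree V E - k + 2"
    using TC_ge_min_degree assms by blast
next
  let ?V = "{0..k}" and ?E = "complete_adj {0..k}"
  have graph: "graph ?V ?E" and degree: "min_degree ?V ?E = k"
    by (simp_all add: graph_complete_adj min_degree_complete_adj)
  obtain \<Omega>\<^sub>0 where "total_k_coalition_partition k ?V ?E \<Omega>\<^sub>0"
    using exists_total_k_coalition_partition_min_degree[OF graph _ assms] degree by auto
  moreover have "total_k_dom k ?V ?E S \<longleftrightarrow> S = ?V" for S
    by (rule total_k_dom_complete_adj_iff[OF _ _ assms]) simp_all
  ultimately have "TC k ?V ?E \<le> 2"
    by (intro TC_le[of ?V]) (auto intro: card_total_k_coalition_partition_le_2)
  moreover have "TC k ?V ?E \<ge> 2" using TC_ge_min_degree[OF graph _ assms] degree by simp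
  ultimately show "\<exists>(V :: nat set) E. graph V E \<and> min_degree V E \<ge> k
            \<and> TC k V E = min_degree V E - k + 2"
    using graph degree by (intro exI[of _ ?V] exI[of _ ?E]) simp
qed

end
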